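(* Let $\mathsf{L}\in\{\mathbf{PD},\mathsf{InqL},\mathbf{PT}\}$ and let $\phi(p_1,\dots,p_n)$ be a consistent formula in the language of $\mathsf L$ with variables among $p_1,\dots,p_n$. The following are equivalent: (i) $\phi\dashv\vdash_{\mathsf L}\Theta_X$ for some nonempty team $X$ on $\{p_1,\dots,p_n\}$; (ii) $\phi$ is flat; (iii) $\phi$ is $\mathcal F$-projective in $\mathsf L$, where $\mathcal F$ is the class of all flat substitutions of $\mathsf L$.
   Context: A valuation is a function from the set Prop of propositional variables to $\{0,1\}$; a team is a set of valuations; a team on $V$ is a set of functions $V\to\{0,1\}$. Formulas of $\mathbf{PT}$: $\phi::=p\mid\bot\mid\top\mid\,=\!(\phi_1,\dots,\phi_n,\phi)\mid\neg\phi\mid\phi\wedge\phi\mid\phi\otimes\phi\mid\phi\vee\phi\mid\phi\to\phi$. Satisfaction on a team $X$: $X\models p$ iff $v(p)=1$ for all $v\in X$; $X\models\bot$ iff $X=\emptyset$; $X\models\top$ always; $\wedge$ conjunction; $X\models\phi\otimes\psi$ iff $X=Y\cup Z$ with $Y\models\phi$, $Z\models\psi$; $X\models\phi\vee\psi$ iff $X\models\phi$ or $X\models\psi$; $X\models\phi\to\psi$ iff every $Y\subseteq X$ with $Y\models\phi$ satisfies $\psi$; $X\models\neg\phi$ iff $\{v\}\not\models\phi$ for all $v\in X$; $X\models\,=\!(\phi_1,\dots,\phi_n,\psi)$ iff $X\models\bigwedge_i(\phi_i\vee(\phi_i\to\bot))\to(\psi\vee(\psi\to\bot))$. $\phi$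 is flat if for all teams $X$: $X\models\phi$ iff $\{v\}\models\phi$ for all $v\in X$. Formulas of $\mathbf{PD}$: $\phi::=p\mid\bot\mid\top\mid\,=\!(\vec\alpha,\beta)\mid\neg\phi\mid\phi\wedge\phi\mid\phi\otimes\phi$ with $\vec\alpha,\beta$ flat, same clauses (for flat arguments the dependence clause says that any $v,v'\in X$ agreeing on the truth of each $\alpha_i$ on singletons agree on the truth of $\beta$). $\mathsf{InqL}$: formulas built from $p,\bot,\top$ by $\wedge,\vee,\to$ with $\neg\phi:=\phi\to\bot$. For finite $\Gamma$, $\Gamma\vdash_{\mathsf L}\phi$ iff all formulas are in the language of $\mathsf L$ and every team satisfying all of $\Gamma$ satisfies $\phi$; $\phi\dashv\vdash_{\mathsf L}\psi$ means both directions. $\phi$ is consistent if some nonempty team satisfies it. For a nonempty team $X$ on $V=\{p_1,\dots,p_n\}$, with $p^1:=p$, $p^0:=\neg p$: $\Theta_X:=\bigotimes_{v\in X}(p_1^{v(p_1)}\wedge\dots\wedge p_n^{v(p_n)})$ when $\mathsf L=\mathbf{PD}$, and $\Theta_X:=\neg\neg\bigvee_{v\in X}(p_1^{v(p_1)}\wedge\dots\wedge p_n^{v(p_n)})$ when $\mathsf L\in\{\mathsf{InqL},\mathbf{PT}\}$. A substitution of $\mathsf L$ is a map on $\mathsf L$-formulas commuting with all connectives and atoms; it is flat if each $\sigma(p)$ is flat. For a set $\mathcal S$ of substitutions, $\phi$ is $\mathcal S$-projective in $\mathsf L$ if there is $\sigma\in\mathcal S$ with $\vdash_{\mathsf L}\sigma(\phi)$,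 and $\phi,\sigma(p)\vdash_{\mathsf L}p$ and $\phi,p\vdash_{\mathsf L}\sigma(p)$ for all propositional variables $p$. *)

theory Defs
  imports Main
begin

section \<open>Syntax of PT (PD and InqL are fragments)\<close>

type_synonym valuation = "nat \<Rightarrow> bool"
type_synonym team = "valuation set"

datatype fm =
    Var nat
  | Bot
  | Top
  | Dep "fm list" fm
  | Neg fm                (* primitive (flat) negation of PT / PD *)
  | Conj fm fm
  | Tensor fm fm
  | Disj fm fm            (* intuitionistic / inquisitive disjunction *)
  | Imp fm fm

function sat :: "team \<Rightarrow> fm \<Rightarrow> bool" where
  "sat X (Var p) = (\<forall>v\<in>X. v p)"
| "sat X Bot = (X = {})"
| "sat X Top = True"
| "sat X (Dep as b) =
     (\<forall>Y\<subseteq>X. (\<forall>a\<in>set as. sat Y a \<or> (\<forall>Z\<subseteq>Y. sat Z a \<longrightarrow> Z = {}))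
              \<longrightarrow> (sat Y b \<or> (\<forall>Z\<subseteq>Y. sat Z b \<longrightarrow> Z = {})))"
| "sat X (Neg a) = (\<forall>v\<in>X. \<not> sat {v} a)"
| "sat X (Conj a b) = (sat X a \<and> sat X b)"
| "sat X (Tensor a b) = (\<exists>Y Z. X = Y \<union> Z \<and> sat Y a \<and> sat Z b)"
| "sat X (Disj a b) = (sat X a \<or> sat X b)"
| "sat X (Imp a b) = (\<forall>Y\<subseteq>X. sat Y a \<longrightarrow> sat Y b)"
  by pat_completeness auto
termination
  by (relation "measure (size \<circ> snd)") (auto simp: less_Suc_eq_le intro: trans_le_add1 size_list_estimation')

definition flat :: "fm \<Rightarrow> bool" where
  "flat \<phi> \<longleftrightarrow> (\<forall>X. sat X \<phi> \<longleftrightarrow> (\<forall>v\<in>X. sat {v} \<phi>))"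

definition consistent :: "fm \<Rightarrow> bool" where
  "consistent \<phi> \<longleftrightarrow> (\<exists>X. X \<noteq> {} \<and> sat X \<phi>)"

fun vars :: "fm \<Rightarrow> nat set" where
  "vars (Var p) = {p}"
| "vars Bot = {}"
| "vars Top = {}"
| "vars (Dep as b) = (\<Union>a\<in>set as. vars a) \<union> vars b"
| "vars (Neg a) = vars a"
| "vars (Conj a b) = vars a \<union> vars b"
| "vars (Tensor a b) = vars a \<union> vars b"
| "vars (Disj a b) = vars a \<union> vars b"
| "vars (Imp a b) = vars a \<union> vars b"

datatype logic = PD | InqL | PT

fun in_PD :: "fm \<Rightarrow> bool" where
  "in_PD (Var p) = True"
| "in_PD Bot = True"
| "in_PD Top = True"
| "in_PD (Dep as b) = ((\<forall>a\<in>set as. in_PD a \<and> flat a) \<and> in_PD b \<and> flat b)"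
| "in_PD (Neg a) = in_PD a"
| "in_PD (Conj a b) = (in_PD a \<and> in_PD b)"
| "in_PD (Tensor a b) = (in_PD a \<and> in_PD b)"
| "in_PD (Disj a b) = False"
| "in_PD (Imp a b) = False"

fun in_InqL :: "fm \<Rightarrow> bool" where
  "in_InqL (Var p) = True"
| "in_InqL Bot = True"
| "in_InqL Top = True"
| "in_InqL (Dep as b) = False"
| "in_InqL (Neg a) = False"
| "in_InqL (Conj a b) = (in_InqL a \<and> in_InqL b)"
| "in_InqL (Tensor a b) = False"
| "in_InqL (Disj a b) = (in_InqL a \<and> in_InqL b)"
| "in_InqL (Imp a b) = (in_InqL a \<and> in_InqL b)"

fun in_L :: "logic \<Rightarrow> fm \<Rightarrow> bool" where
  "in_L PD \<phi> = in_PD \<phi>"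
| "in_L InqL \<phi> = in_InqL \<phi>"
| "in_L PT \<phi> = True"

definition entails :: "logic \<Rightarrow> fm list \<Rightarrow> fm \<Rightarrow> bool" where
  "entails L \<Gamma> \<phi> \<longleftrightarrow> (\<forall>\<gamma>\<in>set \<Gamma>. in_L L \<gamma>) \<and> in_L L \<phi> \<and>
     (\<forall>X. (\<forall>\<gamma>\<in>set \<Gamma>. sat X \<gamma>) \<longrightarrow> sat X \<phi>)"

definition interderivable :: "logic \<Rightarrow> fm \<Rightarrow> fm \<Rightarrow> bool" where
  "interderivable L \<phi> \<psi> \<longleftrightarrow> entails L [\<phi>] \<psi> \<and> entails L [\<psi>] \<phi>"

fun negL :: "logic \<Rightarrow> fm \<Rightarrow> fm" where
  "negL InqL \<phi> = Imp \<phi> Bot"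
| "negL PD \<phi> = Neg \<phi>"
| "negL PT \<phi> = Neg \<phi>"

fun bigConj :: "fm list \<Rightarrow> fm" where
  "bigConj [] = Top"
| "bigConj [a] = a"
| "bigConj (a # as) = Conj a (bigConj as)"

fun bigDisj :: "fm list \<Rightarrow> fm" where
  "bigDisj [] = Bot"
| "bigDisj [a] = a"
| "bigDisj (a # as) = Disj a (bigDisj as)"

fun bigTensor :: "fm list \<Rightarrow> fm" where
  "bigTensor [] = Bot"
| "bigTensor [a] = a"
| "bigTensor (a # as) = Tensor a (bigTensor as)"

(* a team on V: a set of functions V -> {0,1}, represented as valuations
   that are False outside V *)
definition team_on :: "nat set \<Rightarrow> team \<Rightarrow> bool" where
  "team_on V X \<longleftrightarrow> (\<forall>v\<in>X. \<forall>q. q \<notin> V \<longrightarrow> \<not> v q)"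

definition lit :: "logic \<Rightarrow> valuation \<Rightarrow> nat \<Rightarrow> fm" where
  "lit L v p = (if v p then Var p else negL L (Var p))"

definition state_fm :: "logic \<Rightarrow> nat set \<Rightarrow> valuation \<Rightarrow> fm" where
  "state_fm L V v = bigConj (map (lit L v) (sorted_list_of_set V))"

definition enum_team :: "team \<Rightarrow> valuation list" where
  "enum_team X = (SOME xs. distinct xs \<and> set xs = X)"

fun Theta :: "logic \<Rightarrow> nat set \<Rightarrow> team \<Rightarrow> fm" where
  "Theta PD V X = bigTensor (map (state_fm PD V) (enum_team X))"
| "Theta InqL V X = negL InqL (negL InqL (bigDisj (map (state_fm InqL V) (enum_team X))))"
| "Theta PT V X = negL PT (negL PT (bigDisj (map (state_fm PT V) (enum_team X))))"

fun subst :: "(nat \<Rightarrow> fm) \<Rightarrow> fm \<Rightarrow> fm" where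
  "subst s (Var p) = s p"
| "subst s Bot = Bot"
| "subst s Top = Top"
| "subst s (Dep as b) = Dep (map (subst s) as) (subst s b)"
| "subst s (Neg a) = Neg (subst s a)"
| "subst s (Conj a b) = Conj (subst s a) (subst s b)"
| "subst s (Tensor a b) = Tensor (subst s a) (subst s b)"
| "subst s (Disj a b) = Disj (subst s a) (subst s b)"
| "subst s (Imp a b) = Imp (subst s a) (subst s b)"

definition is_subst :: "logic \<Rightarrow> (nat \<Rightarrow> fm) \<Rightarrow> bool" where
  "is_subst L s \<longleftrightarrow> (\<forall>\<phi>. in_L L \<phi> \<longrightarrow> in_L L (subst s \<phi>))"

definition flat_substs :: "logic \<Rightarrow> (nat \<Rightarrow> fm) set" where
  "flat_substs L = {s. is_subst L s \<and> (\<forall>p. flat (s p))}"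

definition projective :: "logic \<Rightarrow> (nat \<Rightarrow> fm) set \<Rightarrow> fm \<Rightarrow> bool" where
  "projective L S \<phi> \<longleftrightarrow> (\<exists>s\<in>S. entails L [] (subst s \<phi>) \<and>
      (\<forall>p. entails L [\<phi>, s p] (Var p) \<and> entails L [\<phi>, Var p] (s p)))"

end

theory Submission imports Defs begin

text \<open>Substituting flat formulas \<open>s p\<close> for the variables acts on teams as taking the image under
  the valuation map \<open>v \<mapsto> (\<lambda>p. {v} \<Turnstile> s p)\<close>. Hence a flat formula \<open>\<phi>\<close> with a model \<open>w\<close> is
  projective via \<open>\<sigma>(p) = (\<phi> \<and> p) \<or> (\<not>\<phi> \<and> w(p))\<close> (classical disjunction): \<open>\<sigma>\<close> sends every valuation
  into the models of \<open>\<phi>\<close> and fixes those already there. Conversely, if \<open>\<sigma>\<close> is a flat projective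
  substitution, the valuation map of \<open>\<sigma>\<close> fixes every valuation satisfying \<open>\<phi>\<close>, so a team all of
  whose members satisfy \<open>\<phi>\<close> is its own image and satisfies \<open>\<phi>\<close> because \<open>\<sigma>(\<phi>)\<close> is valid.
  Flat formulas are determined by their singleton models, which \<open>\<Theta>\<^sub>X\<close> describes exactly.\<close>

lemma sat_empty: "sat {} \<phi>"
proof (induction \<phi>)
  case (Tensor a b) then show ?case by simp
qed auto

lemma sat_subset: "sat X \<phi> \<Longrightarrow> Y \<subseteq> X \<Longrightarrow> sat Y \<phi>"
proof (induction \<phi> arbitrary: X Y)
  case (Tensor a b)
  then obtain X1 X2 where X: "X = X1 \<union> X2" "sat X1 a" "sat X2 b" by auto
  have "Y = (Y \<inter> X1) \<union> (Y \<inter> X2)" using X(1) Tensor.prems(2) by blast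
  moreover have "sat (Y \<inter> X1) a" "sat (Y \<inter> X2) b"
    using Tensor.IH(1)[OF X(2)] Tensor.IH(2)[OF X(3)] by blast+
  ultimately show ?case by (simp only: sat.simps) blast
next
  case (Dep as b)
  from Dep.prems show ?case unfolding sat.simps by (meson order_trans)
next
  case (Imp a b)
  then show ?case by simp
qed auto

lemma satD_singleton: "sat X \<phi> \<Longrightarrow> v \<in> X \<Longrightarrow> sat {v} \<phi>"
  using sat_subset by blast

lemma flatI: "(\<And>X. (\<forall>v\<in>X. sat {v} \<phi>) \<Longrightarrow> sat X \<phi>) \<Longrightarrow> flat \<phi>"
  unfolding flat_def using satD_singleton by blast

lemma flatD: "flat \<phi> \<Longrightarrow> sat X \<phi> = (\<forall>v\<in>X. sat {v} \<phi>)"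
  unfolding flat_def by blast

lemma flat_Var: "flat (Var p)"
  by (rule flatI) simp

lemma flat_Top: "flat Top"
  by (rule flatI) simp

lemma flat_Bot: "flat Bot"
  by (rule flatI) auto

lemma flat_Conj:
  assumes "flat a" "flat b"
  shows "flat (Conj a b)"
proof (rule flatI)
  fix X assume "\<forall>v\<in>X. sat {v} (Conj a b)"
  then show "sat X (Conj a b)" using assms by (simp add: flatD[of a X] flatD[of b X])
qed

lemma sat_Imp_Bot: "sat X (Imp a Bot) = (\<forall>v\<in>X. \<not> sat {v} a)"
  by (simp only: sat.simps) (blast dest: satD_singleton)

lemma sat_negL: "sat X (negL L a) = (\<forall>v\<in>X. \<not> sat {v} a)"
  by (cases L) (simp_all only: negL.simps sat_Imp_Bot, simp_all)

lemma flat_negL: "flat (negL L a)"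
  by (rule flatI) (simp add: sat_negL)

lemma sat_singleton_Tensor:
  assumes "flat a" "flat b"
  shows "sat {v} (Tensor a b) = (sat {v} a \<or> sat {v} b)"
proof
  assume "sat {v} (Tensor a b)"
  then obtain Y Z where "{v} = Y \<union> Z" "sat Y a" "sat Z b" by auto
  then show "sat {v} a \<or> sat {v} b" using assms by (metis UnE flatD insertI1)
next
  assume "sat {v} a \<or> sat {v} b"
  then show "sat {v} (Tensor a b)"
    using sat_empty[of a] sat_empty[of b] by (simp only: sat.simps) blast
qed

lemma flat_Tensor:
  assumes "flat a" "flat b"
  shows "flat (Tensor a b)"
proof (rule flatI)
  fix X assume "\<forall>v\<in>X. sat {v} (Tensor a b)"
  then have "X = {v\<in>X. sat {v} a} \<union> {v\<in>X. sat {v} b}"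
    using sat_singleton_Tensor[OF assms] by blast
  moreover have "sat {v\<in>X. sat {v} a} a" "sat {v\<in>X. sat {v} b} b"
    using assms flatD[of a "{v\<in>X. sat {v} a}"] flatD[of b "{v\<in>X. sat {v} b}"] by simp_all
  ultimately show "sat X (Tensor a b)" by (simp only: sat.simps) blast
qed

lemma flat_cong: "(\<And>X. sat X \<phi> = sat X \<psi>) \<Longrightarrow> flat \<phi> = flat \<psi>"
  unfolding flat_def by simp

subsection \<open>Flat substitutions act as images of teams\<close>

lemma image_Int_vimage_eq:
  assumes "A \<subseteq> f ` Y"
  shows "f ` (Y \<inter> f -` A) = A"
proof
  show "A \<subseteq> f ` (Y \<inter> f -` A)"
  proof
    fix x assume "x \<in> A"
    with assms obtain y where "y \<in> Y" "x = f y" by blast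
    with \<open>x \<in> A\<close> show "x \<in> f ` (Y \<inter> f -` A)" by blast
  qed
qed blast

lemma sat_subst_image:
  assumes "\<And>p. p \<in> vars \<psi> \<Longrightarrow> flat (s p)"
    and "\<And>v p. p \<in> vars \<psi> \<Longrightarrow> sat {v} (s p) = f v p"
  shows "sat Y (subst s \<psi>) = sat (f ` Y) \<psi>"
  using assms
proof (induction \<psi> arbitrary: Y)
  case (Var p)
  then show ?case by (simp add: flatD[of "s p" Y])
next
  case (Neg a)
  then show ?case using Neg.IH[of "{_}"] by simp
next
  case (Tensor a b)
  have IH: "sat Z (subst s a) = sat (f ` Z) a" "sat Z (subst s b) = sat (f ` Z) b" for Z
    using Tensor by auto
  show ?case
  proof
    assume "sat Y (subst s (Tensor a b))"
    then obtain Y1 Y2 where "Y = Y1 \<union> Y2" "sat Y1 (subst s a)" "sat Y2 (subst s b)" by auto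
    then have "f ` Y = f ` Y1 \<union> f ` Y2" "sat (f ` Y1) a" "sat (f ` Y2) b" using IH by auto
    then show "sat (f ` Y) (Tensor a b)" by (simp only: sat.simps) blast
  next
    assume "sat (f ` Y) (Tensor a b)"
    then obtain A B where AB: "f ` Y = A \<union> B" "sat A a" "sat B b" by auto
    have "f ` (Y \<inter> f -` A) = A" "f ` (Y \<inter> f -` B) = B"
      using AB(1) by (simp_all add: image_Int_vimage_eq)
    moreover have "Y = (Y \<inter> f -` A) \<union> (Y \<inter> f -` B)" using AB(1) by auto
    ultimately show "sat Y (subst s (Tensor a b))"
      using IH AB by (simp only: subst.simps sat.simps) metis
  qed
next
  case (Imp a b)
  have IH: "sat Z (subst s a) = sat (f ` Z) a" "sat Z (subst s b) = sat (f ` Z) b" for Z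
    using Imp by auto
  show ?case unfolding subst.simps sat.simps IH by (rule all_subset_image[symmetric])
next
  case (Dep as b)
  have IH: "a \<in> set as \<Longrightarrow> sat Z (subst s a) = sat (f ` Z) a" "sat Z (subst s b) = sat (f ` Z) b"
    for a Z using Dep by fastforce+
  have only_empty: "(\<forall>W\<subseteq>Z. sat (f ` W) c \<longrightarrow> W = {}) = (\<forall>W\<subseteq>f ` Z. sat W c \<longrightarrow> W = {})"
    for c Z by (subst all_subset_image) simp
  define dep where "dep Z \<longleftrightarrow> (\<forall>a\<in>set as. sat Z a \<or> (\<forall>W\<subseteq>Z. sat W a \<longrightarrow> W = {}))
    \<longrightarrow> sat Z b \<or> (\<forall>W\<subseteq>Z. sat W b \<longrightarrow> W = {})" for Z
  have "sat Y (subst s (Dep as b)) = (\<forall>Z\<subseteq>Y. dep (f ` Z))"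
    unfolding dep_def by (simp add: IH only_empty cong: ball_cong)
  also have "\<dots> = (\<forall>Z\<subseteq>f ` Y. dep Z)"
    by (rule all_subset_image[symmetric])
  also have "\<dots> = sat (f ` Y) (Dep as b)"
    unfolding dep_def by simp
  finally show ?case .
qed auto

lemma flat_subst:
  assumes "\<And>p. flat (s p)" "flat \<phi>"
  shows "flat (subst s \<phi>)"
proof (rule flatI)
  fix Y assume all: "\<forall>v\<in>Y. sat {v} (subst s \<phi>)"
  define f where "f v p = sat {v} (s p)" for v p
  have image: "sat Z (subst s \<phi>) = sat (f ` Z) \<phi>" for Z
    by (rule sat_subst_image) (simp_all add: assms(1) f_def)
  have "\<forall>x\<in>f ` Y. sat {x} \<phi>" using all image[of "{_}"] by simp
  then show "sat Y (subst s \<phi>)" using image flatD[OF assms(2), of "f ` Y"] by simp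
qed

lemma subst_Var: "subst Var \<phi> = \<phi>"
proof (induction \<phi>)
  case (Dep as b)
  have "map (subst Var) as = as" using Dep.IH(1) by (induction as) auto
  then show ?case using Dep.IH(2) by simp
qed simp_all

definition restrict_val :: "nat set \<Rightarrow> valuation \<Rightarrow> valuation" where
  "restrict_val V v = (\<lambda>q. q \<in> V \<and> v q)"

lemma sat_singleton_restrict_val:
  assumes "vars \<phi> \<subseteq> V"
  shows "sat {restrict_val V v} \<phi> = sat {v} \<phi>"
  using sat_subst_image[of \<phi> Var "restrict_val V" "{v}"] assms
  by (auto simp: subst_Var flat_Var restrict_val_def)

lemma sat_bigConj: "sat X (bigConj xs) = (\<forall>a\<in>set xs. sat X a)"
  by (induction xs rule: bigConj.induct) auto

lemma flat_bigConj: "\<forall>a\<in>set xs. flat a \<Longrightarrow> flat (bigConj xs)"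
  by (induction xs rule: bigConj.induct) (auto simp: flat_Top flat_Conj)

lemma sat_singleton_bigDisj: "sat {v} (bigDisj xs) = (\<exists>a\<in>set xs. sat {v} a)"
  by (induction xs rule: bigDisj.induct) auto

lemma flat_bigTensor: "\<forall>a\<in>set xs. flat a \<Longrightarrow> flat (bigTensor xs)"
  by (induction xs rule: bigTensor.induct) (simp_all add: flat_Bot flat_Tensor)

lemma sat_singleton_bigTensor:
  "\<forall>a\<in>set xs. flat a \<Longrightarrow> sat {v} (bigTensor xs) = (\<exists>a\<in>set xs. sat {v} a)"
proof (induction xs rule: bigTensor.induct)
  case (3 a b as)
  have "flat a" "flat (bigTensor (b # as))" using "3.prems" flat_bigTensor by simp_all
  then have step: "sat {v} (bigTensor (a # b # as)) = (sat {v} a \<or> sat {v} (bigTensor (b # as)))"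
    using sat_singleton_Tensor by (simp only: bigTensor.simps)
  show ?case unfolding step using 3 by simp
qed simp_all

lemma sat_singleton_lit: "sat {u} (lit L v p) = (u p = v p)"
  unfolding lit_def by (simp add: sat_negL)

lemma sat_singleton_state_fm: "finite V \<Longrightarrow> sat {u} (state_fm L V v) = (\<forall>p\<in>V. u p = v p)"
  unfolding state_fm_def by (simp add: sat_bigConj sat_singleton_lit)

lemma flat_state_fm: "flat (state_fm L V v)"
  unfolding state_fm_def lit_def by (rule flat_bigConj) (auto simp: flat_Var flat_negL)

lemma team_on_finite:
  assumes "finite V" "team_on V X"
  shows "finite X"
proof (rule finite_subset)
  show "X \<subseteq> (\<lambda>S q. q \<in> S) ` Pow V"
  proof
    fix v assume "v \<in> X"
    then have "v = (\<lambda>q. q \<in> {q\<in>V. v q})" using assms(2) unfolding team_on_def by auto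
    then show "v \<in> (\<lambda>S q. q \<in> S) ` Pow V" by blast
  qed
qed (simp add: assms(1))

lemma set_enum_team: "finite X \<Longrightarrow> set (enum_team X) = X"
  unfolding enum_team_def by (rule someI2_ex) (auto dest: finite_distinct_list)

lemma team_on_agree_iff:
  assumes "team_on V X"
  shows "(\<exists>w\<in>X. \<forall>p\<in>V. u p = w p) = (restrict_val V u \<in> X)"
proof
  assume "\<exists>w\<in>X. \<forall>p\<in>V. u p = w p"
  then obtain w where "w \<in> X" "\<forall>p\<in>V. u p = w p" by blast
  moreover have "restrict_val V u = w"
    using calculation assms unfolding restrict_val_def team_on_def by fastforce
  ultimately show "restrict_val V u \<in> X" by simp
next
  assume "restrict_val V u \<in> X"
  then show "\<exists>w\<in>X. \<forall>p\<in>V. u p = w p" by (rule bexI[rotated]) (simp add: restrict_val_def)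
qed

lemma flat_Theta: "flat (Theta L V X)"
  by (cases L) (auto simp del: negL.simps simp: flat_negL intro!: flat_bigTensor flat_state_fm)

lemma sat_singleton_Theta:
  assumes "finite V" "team_on V X"
  shows "sat {u} (Theta L V X) = (restrict_val V u \<in> X)"
proof -
  have "(\<exists>a\<in>set (map (state_fm L V) (enum_team X)). sat {u} a) = (restrict_val V u \<in> X)"
    using set_enum_team[OF team_on_finite[OF assms]] team_on_agree_iff[OF assms(2)]
      sat_singleton_state_fm[OF assms(1)] by simp
  then show ?thesis
    by (cases L) (simp_all add: sat_negL sat_singleton_bigDisj sat_singleton_bigTensor flat_state_fm
        del: negL.simps)
qed

lemma in_L_Var: "in_L L (Var p)" by (cases L) auto
lemma in_L_Top: "in_L L Top" by (cases L) auto
lemma in_L_Bot: "in_L L Bot" by (cases L) auto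
lemma in_L_Conj: "in_L L a \<Longrightarrow> in_L L b \<Longrightarrow> in_L L (Conj a b)" by (cases L) auto
lemma in_L_negL: "in_L L a \<Longrightarrow> in_L L (negL L a)" by (cases L) auto

lemma in_L_bigConj: "\<forall>a\<in>set xs. in_L L a \<Longrightarrow> in_L L (bigConj xs)"
  by (induction xs rule: bigConj.induct) (auto simp: in_L_Top in_L_Conj)

lemma in_PD_bigTensor: "\<forall>a\<in>set xs. in_PD a \<Longrightarrow> in_PD (bigTensor xs)"
  by (induction xs rule: bigTensor.induct) auto

lemma in_InqL_bigDisj: "\<forall>a\<in>set xs. in_InqL a \<Longrightarrow> in_InqL (bigDisj xs)"
  by (induction xs rule: bigDisj.induct) auto

lemma in_L_state_fm: "in_L L (state_fm L V v)"
  unfolding state_fm_def lit_def by (rule in_L_bigConj) (auto simp: in_L_Var in_L_negL)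

lemma in_L_Theta: "in_L L (Theta L V X)"
proof (cases L)
  case PD
  then show ?thesis using in_L_state_fm[of PD] by (auto intro!: in_PD_bigTensor)
next
  case InqL
  then show ?thesis using in_L_state_fm[of InqL] by (auto intro!: in_InqL_bigDisj)
qed simp

text \<open>Flatness of the substituted formulas is what keeps the dependence atoms of \<open>PD\<close> well formed.\<close>
lemma in_PD_subst: "(\<And>p. in_PD (s p) \<and> flat (s p)) \<Longrightarrow> in_PD \<phi> \<Longrightarrow> in_PD (subst s \<phi>)"
  by (induction \<phi>) (auto simp: flat_subst)

lemma in_InqL_subst: "(\<And>p. in_InqL (s p)) \<Longrightarrow> in_InqL \<phi> \<Longrightarrow> in_InqL (subst s \<phi>)"
  by (induction \<phi>) auto

lemma flat_substsI: "(\<And>p. in_L L (s p) \<and> flat (s p)) \<Longrightarrow> s \<in> flat_substs L"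
  unfolding flat_substs_def is_subst_def by (cases L) (auto intro: in_PD_subst in_InqL_subst)

lemma interderivable_iff:
  "interderivable L \<phi> \<psi> \<longleftrightarrow> in_L L \<phi> \<and> in_L L \<psi> \<and> (\<forall>X. sat X \<phi> = sat X \<psi>)"
  unfolding interderivable_def entails_def by auto

lemma interderivable_Theta_imp_flat: "interderivable L \<phi> (Theta L V X) \<Longrightarrow> flat \<phi>"
  using flat_cong[of \<phi> "Theta L V X"] flat_Theta by (simp add: interderivable_iff)

lemma flat_imp_interderivable_Theta:
  assumes "in_L L \<phi>" "finite V" "vars \<phi> \<subseteq> V" "consistent \<phi>" "flat \<phi>"
  shows "\<exists>X. X \<noteq> {} \<and> team_on V X \<and> interderivable L \<phi> (Theta L V X)"
proof -
  define X where "X = restrict_val V ` {v. sat {v} \<phi>}"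
  have nonempty: "X \<noteq> {}"
    using assms(4) unfolding consistent_def X_def by (blast dest: satD_singleton)
  have team: "team_on V X" unfolding team_on_def X_def restrict_val_def by auto
  have "sat {v} (Theta L V X) = sat {v} \<phi>" for v
  proof
    assume "sat {v} (Theta L V X)"
    then obtain u where "sat {u} \<phi>" "restrict_val V v = restrict_val V u"
      unfolding sat_singleton_Theta[OF assms(2) team] unfolding X_def by blast
    then show "sat {v} \<phi>" using sat_singleton_restrict_val[OF assms(3)] by metis
  next
    assume "sat {v} \<phi>"
    then show "sat {v} (Theta L V X)"
      unfolding sat_singleton_Theta[OF assms(2) team] unfolding X_def by blast
  qed
  then have "sat Y \<phi> = sat Y (Theta L V X)" for Y
    using flatD[OF assms(5), of Y] flatD[OF flat_Theta, of Y] by simp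
  then have "interderivable L \<phi> (Theta L V X)"
    using assms(1) in_L_Theta by (simp add: interderivable_iff)
  with nonempty team show ?thesis by blast
qed

text \<open>Classical disjunction; unlike \<open>Disj\<close> and \<open>Tensor\<close> it is flat and available in all three logics.\<close>
definition cdisj :: "logic \<Rightarrow> fm \<Rightarrow> fm \<Rightarrow> fm" where
  "cdisj L a b = negL L (Conj (negL L a) (negL L b))"

lemma sat_singleton_cdisj: "sat {v} (cdisj L a b) = (sat {v} a \<or> sat {v} b)"
  unfolding cdisj_def by (simp add: sat_negL)

lemma flat_imp_projective:
  assumes "in_L L \<phi>" "flat \<phi>" "consistent \<phi>"
  shows "projective L (flat_substs L) \<phi>"
proof -
  obtain w where w: "sat {w} \<phi>"
    using assms(3) unfolding consistent_def by (blast dest: satD_singleton)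
  define \<sigma> where "\<sigma> p = cdisj L (Conj \<phi> (Var p)) (Conj (negL L \<phi>) (if w p then Top else Bot))" for p
  have sat_\<sigma>: "sat {v} (\<sigma> p) = (if sat {v} \<phi> then v p else w p)" for v p
    unfolding \<sigma>_def by (simp add: sat_singleton_cdisj sat_negL)
  have flat_\<sigma>: "flat (\<sigma> p)" for p
    unfolding \<sigma>_def cdisj_def by (rule flat_negL)
  have in_L_\<sigma>: "in_L L (\<sigma> p)" for p
    unfolding \<sigma>_def cdisj_def using assms(1)
    by (simp add: in_L_negL in_L_Conj in_L_Var in_L_Top in_L_Bot)
  define f where "f v = (if sat {v} \<phi> then v else w)" for v
  have image: "sat Y (subst \<sigma> \<phi>) = sat (f ` Y) \<phi>" for Y
    by (rule sat_subst_image) (simp_all add: flat_\<sigma> sat_\<sigma> f_def)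
  have valid: "sat Y (subst \<sigma> \<phi>)" for Y
  proof -
    have "\<forall>x\<in>f ` Y. sat {x} \<phi>" using w by (auto simp: f_def)
    then show ?thesis unfolding image using flatD[OF assms(2), of "f ` Y"] by simp
  qed
  have agree: "sat Y (\<sigma> p) = sat Y (Var p)" if "sat Y \<phi>" for Y p
    using that flatD[OF assms(2), of Y] flatD[OF flat_\<sigma>, of Y] by (simp add: sat_\<sigma>)
  have "\<sigma> \<in> flat_substs L" using flat_substsI flat_\<sigma> in_L_\<sigma> by blast
  moreover have "in_L L (subst \<sigma> \<phi>)"
    using calculation assms(1) unfolding flat_substs_def is_subst_def by blast
  ultimately show ?thesis
    unfolding projective_def entails_def
    using assms(1) in_L_\<sigma> in_L_Var valid agree by (intro bexI[where x = \<sigma>]) auto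
qed

lemma projective_flat_substs_imp_flat:
  assumes "projective L (flat_substs L) \<phi>"
  shows "flat \<phi>"
proof -
  obtain s where s: "\<And>p. flat (s p)" and valid: "\<And>Y. sat Y (subst s \<phi>)"
    and agree: "\<And>Y p. sat Y \<phi> \<Longrightarrow> sat Y (s p) = sat Y (Var p)"
    using assms unfolding projective_def entails_def flat_substs_def by fastforce
  define f where "f v p = sat {v} (s p)" for v p
  have image: "sat Y (subst s \<phi>) = sat (f ` Y) \<phi>" for Y
    by (rule sat_subst_image) (simp_all add: s f_def)
  show ?thesis
  proof (rule flatI)
    fix Y assume "\<forall>v\<in>Y. sat {v} \<phi>"
    then have "f v = v" if "v \<in> Y" for v
      using agree[of "{v}"] that unfolding f_def by fastforce
    then have "f ` Y = Y" by simp
    then show "sat Y \<phi>" using valid image by metis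
  qed
qed

theorem lemma4p6:
  fixes L :: logic and \<phi> :: fm and V :: "nat set"
  assumes "in_L L \<phi>" and "finite V" and "vars \<phi> \<subseteq> V" and "consistent \<phi>"
  shows "((\<exists>X. X \<noteq> {} \<and> team_on V X \<and> interderivable L \<phi> (Theta L V X)) \<longleftrightarrow> flat \<phi>)
       \<and> (flat \<phi> \<longleftrightarrow> projective L (flat_substs L) \<phi>)"
  using interderivable_Theta_imp_flat flat_imp_interderivable_Theta[OF assms]
    flat_imp_projective[OF assms(1) _ assms(4)] projective_flat_substs_imp_flat
  by blast

end
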